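(* There is a universal constant $C>0$ such that the following holds. Let $S$ be a finite set, $T\ge1$ an integer, $(x_i)_{0\le i\le T}$ a sequence of (not necessarily distinct) elements of $S$, $r\ge2$, and $f:S\to(0,\infty)$ such that $\max\big(\frac{f(x_i)}{f(x_{i-1})},\frac{f(x_{i-1})}{f(x_i)}\big)\le r$ for $1\le i\le T$. Then $$\big(f(x_T)-f(x_0)\big)\log\frac{f(x_T)}{f(x_0)}\le C\big(1+(T-1)^2\log r\big)\sum_{t=1}^T\big(f(x_t)-f(x_{t-1})\big)\log\frac{f(x_t)}{f(x_{t-1})}.$$ *)

theory Defs
  imports "HOL-Analysis.Analysis"
begin

end

theory Submission
  imports Defs
begin

text \<open>
  Write \<open>E(a,b) = (b - a) ln (b/a)\<close> and let \<open>a\<^sub>0, \<dots>, a\<^sub>T\<close> be the values \<open>f(x\<^sub>i)\<close>, with maximum \<open>m\<close>,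
  total variation \<open>V\<close> and energy \<open>G = \<Sum> E(a\<^sub>i, a\<^sub>i\<^sub>+\<^sub>1)\<close>. Since \<open>(b - a)\<^sup>2 \<le> max a b \<cdot> E(a,b)\<close>,
  Cauchy-Schwarz gives \<open>V\<^sup>2 \<le> T m G\<close>. On the other hand the bounded step ratios give
  \<open>|ln a\<^sub>T - ln a\<^sub>0| \<le> T ln r\<close>, and a short case analysis on the sizes of \<open>a\<^sub>0\<close>, \<open>a\<^sub>T\<close>
  and \<open>m\<close> shows \<open>E(a\<^sub>0, a\<^sub>T) m \<le> 8 T ln r V\<^sup>2\<close>. Together,
  \<open>E(a\<^sub>0, a\<^sub>T) \<le> 8 T\<^sup>2 ln r G\<close>, and \<open>T\<^sup>2 \<le> 4 (T - 1)\<^sup>2\<close> for \<open>T \<ge> 2\<close> yields the constant 32.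
\<close>

definition log_energy :: "real \<Rightarrow> real \<Rightarrow> real" where
  "log_energy a b = (b - a) * ln (b / a)"

lemma log_energy_commute:
  assumes "a > 0" "b > 0"
  shows "log_energy a b = log_energy b a"
  using assms by (simp add: log_energy_def ln_div algebra_simps)

lemma log_energy_nonneg:
  assumes "a > 0" "b > 0"
  shows "log_energy a b \<ge> 0"
  using assms by (cases "a \<le> b") (auto simp: log_energy_def mult_nonpos_nonpos)

lemma square_le_log_energy_mult:
  assumes "a > 0" "b > 0" "a \<le> m" "b \<le> m"
  shows "(b - a)\<^sup>2 \<le> m * log_energy a b"
proof -
  have ordered: "(d - c)\<^sup>2 \<le> m * log_energy c d"
    if "0 < c" "c \<le> d" "d \<le> m" for c d :: real
  proof -
    have "1 - c / d \<le> ln (d / c)"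
      using ln_le_minus_one[of "c / d"] that by (simp add: ln_div)
    then have "(d - c) * ((d - c) / d) \<le> log_energy c d"
      using that by (simp add: log_energy_def diff_divide_distrib mult_left_mono)
    then have "(d - c)\<^sup>2 \<le> d * log_energy c d"
      using that by (simp add: field_simps power2_eq_square)
    also have "\<dots> \<le> m * log_energy c d"
      using that log_energy_nonneg[of c d] by (intro mult_right_mono) auto
    finally show ?thesis .
  qed
  show ?thesis
  proof (cases "a \<le> b")
    case True
    then show ?thesis using ordered assms by blast
  next
    case False
    then show ?thesis
      using ordered[of b a] assms log_energy_commute[of a b] by (simp add: power2_commute)
  qed
qed

lemma log_energy_le_square_div:
  assumes "0 < a" "a \<le> b"
  shows "log_energy a b \<le> (b - a)\<^sup>2 / a"
proof -
  have "ln (b / a) \<le> (b - a) / a"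
    using ln_le_minus_one[of "b / a"] assms by (simp add: diff_divide_distrib)
  then have "log_energy a b \<le> (b - a) * ((b - a) / a)"
    unfolding log_energy_def by (rule mult_left_mono) (use assms in simp)
  then show ?thesis by (simp add: power2_eq_square)
qed

lemma abs_diff_le_variation:
  fixes a :: "nat \<Rightarrow> 'a::ordered_ab_group_add_abs"
  assumes "k \<le> n"
  shows "\<bar>a n - a k\<bar> \<le> (\<Sum>i = k..<n. \<bar>a (Suc i) - a i\<bar>)"
  using sum_abs[of "\<lambda>i. a (Suc i) - a i" "{k..<n}"] by (simp add: sum_Suc_diff' assms)

lemma abs_ln_diff_le_ln:
  fixes a b r :: real
  assumes "a > 0" "b > 0" "max (b / a) (a / b) \<le> r"
  shows "\<bar>ln b - ln a\<bar> \<le> ln r"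
proof -
  have "ln (b / a) \<le> ln r" "ln (a / b) \<le> ln r"
    using assms by (simp_all add: ln_mono)
  then show ?thesis using assms by (simp add: ln_div abs_if)
qed

lemma log_energy_mult_le_ordered:
  assumes "0 < a" "a \<le> b" "b \<le> m" "ln b - ln a \<le> L" "1/2 \<le> L"
    and "b - a \<le> V" "2 * m - a - b \<le> V"
  shows "m * log_energy a b \<le> 8 * L * V\<^sup>2"
proof -
  have V: "0 \<le> V" and m: "0 < m" using assms by linarith+
  have E: "log_energy a b \<le> V * L"
  proof -
    have "log_energy a b \<le> (b - a) * L"
      unfolding log_energy_def using assms by (simp add: ln_div mult_left_mono)
    also have "\<dots> \<le> V * L" using assms by (intro mult_right_mono) auto
    finally show ?thesis .
  qed
  have LV: "0 \<le> L * V\<^sup>2" using assms by simp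
  have E0: "0 \<le> log_energy a b" using assms log_energy_nonneg[of a b] by simp
  consider (small_ends) "2 * b \<le> m" | (spread) "m < 2 * b" "2 * a \<le> b"
    | (close) "m < 2 * b" "b < 2 * a" by linarith
  then show ?thesis
  proof cases
    case small_ends
    then have "m \<le> V" using assms by linarith
    then have "m * log_energy a b \<le> V * (V * L)"
      using E E0 V by (intro mult_mono) auto
    then show ?thesis using LV by (simp add: power2_eq_square algebra_simps)
  next
    case spread
    then have "m \<le> 4 * V" using assms by linarith
    then have "m * log_energy a b \<le> (4 * V) * (V * L)"
      using E E0 V by (intro mult_mono) auto
    then show ?thesis using LV by (simp add: power2_eq_square algebra_simps)
  next
    case close
    have "m * log_energy a b \<le> m * ((b - a)\<^sup>2 / a)"
      using log_energy_le_square_div[of a b] assms m by (intro mult_left_mono) auto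
    also have "\<dots> = (m / a) * (b - a)\<^sup>2" by simp
    also have "\<dots> \<le> 4 * (b - a)\<^sup>2"
      using close assms by (intro mult_right_mono) (simp_all add: field_simps)
    also have "\<dots> \<le> 4 * V\<^sup>2"
      using assms by (simp add: power_mono)
    also have "\<dots> \<le> 8 * L * V\<^sup>2"
      using assms by (intro mult_right_mono) auto
    finally show ?thesis .
  qed
qed

lemma log_energy_mult_le:
  assumes "0 < a" "0 < b" "a \<le> m" "b \<le> m" "\<bar>ln b - ln a\<bar> \<le> L" "1/2 \<le> L"
    and "\<bar>b - a\<bar> \<le> V" "2 * m - a - b \<le> V"
  shows "m * log_energy a b \<le> 8 * L * V\<^sup>2"
proof (cases "a \<le> b")
  case True
  then show ?thesis using assms by (intro log_energy_mult_le_ordered) auto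
next
  case False
  then have "m * log_energy b a \<le> 8 * L * V\<^sup>2"
    using assms by (intro log_energy_mult_le_ordered) auto
  then show ?thesis using assms log_energy_commute[of a b] by simp
qed

lemma variation_sq_le_energy:
  fixes a :: "nat \<Rightarrow> real"
  assumes "\<And>i. i \<le> T \<Longrightarrow> 0 < a i" "\<And>i. i \<le> T \<Longrightarrow> a i \<le> m"
  shows "(\<Sum>i<T. \<bar>a (Suc i) - a i\<bar>)\<^sup>2 \<le> T * (m * (\<Sum>i<T. log_energy (a i) (a (Suc i))))"
proof -
  have "(\<Sum>i<T. \<bar>a (Suc i) - a i\<bar>)\<^sup>2 \<le> (\<Sum>i<T. \<bar>a (Suc i) - a i\<bar>\<^sup>2) * card {..<T}"
    by (rule sum_squared_le_sum_of_squares)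
  also have "\<dots> = T * (\<Sum>i<T. (a (Suc i) - a i)\<^sup>2)" by simp
  also have "\<dots> \<le> T * (\<Sum>i<T. m * log_energy (a i) (a (Suc i)))"
    using assms by (intro mult_left_mono sum_mono square_le_log_energy_mult) auto
  finally show ?thesis by (simp add: sum_distrib_left)
qed

lemma log_energy_endpoints_le:
  fixes a :: "nat \<Rightarrow> real"
  assumes pos: "\<And>i. i \<le> T \<Longrightarrow> 0 < a i" and "1 \<le> T" "2 \<le> r"
    and step: "\<And>i. i < T \<Longrightarrow> \<bar>ln (a (Suc i)) - ln (a i)\<bar> \<le> ln r"
  shows "log_energy (a 0) (a T)
    \<le> 8 * (real T)\<^sup>2 * ln r * (\<Sum>i<T. log_energy (a i) (a (Suc i)))"
proof -
  define m where "m = Max (a ` {..T})"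
  define V where "V = (\<Sum>i<T. \<bar>a (Suc i) - a i\<bar>)"
  define G where "G = (\<Sum>i<T. log_energy (a i) (a (Suc i)))"
  define L where "L = real T * ln r"
  have le_m: "\<And>i. i \<le> T \<Longrightarrow> a i \<le> m" unfolding m_def by auto
  have "m \<in> a ` {..T}" unfolding m_def by (intro Max_in) auto
  then obtain k where k: "k \<le> T" "a k = m" by auto
  have "m > 0" using pos[of 0] le_m[of 0] by simp
  have "ln 2 \<le> ln r" using \<open>2 \<le> r\<close> by simp
  then have "1/2 \<le> ln r" using ln2_ge_two_thirds by linarith
  also have "\<dots> \<le> L"
    unfolding L_def using \<open>1 \<le> T\<close> \<open>1/2 \<le> ln r\<close> by (intro mult_le_cancel_right1[THEN iffD2]) auto
  finally have "1/2 \<le> L" .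
  have "\<bar>ln (a T) - ln (a 0)\<bar> \<le> (\<Sum>i = 0..<T. \<bar>ln (a (Suc i)) - ln (a i)\<bar>)"
    using abs_diff_le_variation[of 0 T "\<lambda>i. ln (a i)"] by simp
  also have "\<dots> \<le> (\<Sum>i = 0..<T. ln r)" by (intro sum_mono step) simp
  also have "\<dots> = L" unfolding L_def by simp
  finally have ln_ends: "\<bar>ln (a T) - ln (a 0)\<bar> \<le> L" .
  have ends: "\<bar>a T - a 0\<bar> \<le> V"
    using abs_diff_le_variation[of 0 T a] unfolding V_def by (simp add: atLeast0LessThan)
  have "m - a 0 \<le> (\<Sum>i = 0..<k. \<bar>a (Suc i) - a i\<bar>)" and "m - a T \<le> (\<Sum>i = k..<T. \<bar>a (Suc i) - a i\<bar>)"
    using abs_diff_le_variation[of 0 k a] abs_diff_le_variation[of k T a] k by simp_all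
  moreover have "V = (\<Sum>i = 0..<k. \<bar>a (Suc i) - a i\<bar>) + (\<Sum>i = k..<T. \<bar>a (Suc i) - a i\<bar>)"
    unfolding V_def using k by (simp add: atLeast0LessThan[symmetric] sum.atLeastLessThan_concat)
  ultimately have climb: "2 * m - a 0 - a T \<le> V" by linarith
  have "m * log_energy (a 0) (a T) \<le> 8 * L * V\<^sup>2"
    using pos[of 0] pos[of T] le_m[of 0] le_m[of T] ln_ends \<open>1/2 \<le> L\<close> ends climb
    by (intro log_energy_mult_le) auto
  also have "\<dots> \<le> 8 * L * (T * (m * G))"
    using variation_sq_le_energy[of T a m, OF pos le_m] \<open>1/2 \<le> L\<close>
    unfolding V_def G_def by (intro mult_left_mono) auto
  also have "\<dots> = m * (8 * (real T)\<^sup>2 * ln r * G)"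
    unfolding L_def by (simp add: power2_eq_square)
  finally show ?thesis unfolding G_def using \<open>m > 0\<close> by simp
qed

lemma square_coefficient_le:
  assumes "2 \<le> T" "0 \<le> l"
  shows "8 * (real T)\<^sup>2 * l \<le> 32 * (1 + (real T - 1)\<^sup>2 * l)"
proof -
  have "(real T)\<^sup>2 \<le> (2 * (real T - 1))\<^sup>2" using assms by (intro power_mono) auto
  also have "\<dots> = 4 * (real T - 1)\<^sup>2" by (simp only: power_mult_distrib) simp
  finally have "(real T)\<^sup>2 * l \<le> 4 * (real T - 1)\<^sup>2 * l"
    using \<open>0 \<le> l\<close> by (rule mult_right_mono)
  then show ?thesis by simp
qed

theorem mainTheorem12:
  shows "\<exists>C::real. C > 0 \<and>
    (\<forall>(S::nat set) (T::nat) (x::nat \<Rightarrow> nat) (r::real) (f::nat \<Rightarrow> real).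
      finite S \<longrightarrow> T \<ge> 1 \<longrightarrow> (\<forall>i\<le>T. x i \<in> S) \<longrightarrow> r \<ge> 2 \<longrightarrow>
      (\<forall>s\<in>S. f s > 0) \<longrightarrow>
      (\<forall>i\<in>{1..T}. max (f (x i) / f (x (i - 1))) (f (x (i - 1)) / f (x i)) \<le> r) \<longrightarrow>
      (f (x T) - f (x 0)) * ln (f (x T) / f (x 0))
        \<le> C * (1 + (real T - 1)^2 * ln r) *
          (\<Sum>t = 1..T. (f (x t) - f (x (t - 1))) * ln (f (x t) / f (x (t - 1)))))"
proof (intro exI[of _ 32] conjI allI impI)
  fix S :: "nat set" and T :: nat and x :: "nat \<Rightarrow> nat" and r :: real and f :: "nat \<Rightarrow> real"
  assume "T \<ge> 1" and "\<forall>i\<le>T. x i \<in> S" and "r \<ge> 2" and "\<forall>s\<in>S. f s > 0"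
    and ratio: "\<forall>i\<in>{1..T}. max (f (x i) / f (x (i - 1))) (f (x (i - 1)) / f (x i)) \<le> r"
  define a where "a i = f (x i)" for i
  define G where "G = (\<Sum>i<T. log_energy (a i) (a (Suc i)))"
  have pos: "\<And>i. i \<le> T \<Longrightarrow> 0 < a i"
    using \<open>\<forall>i\<le>T. x i \<in> S\<close> \<open>\<forall>s\<in>S. f s > 0\<close> unfolding a_def by auto
  have step: "\<bar>ln (a (Suc i)) - ln (a i)\<bar> \<le> ln r" if "i < T" for i
    using abs_ln_diff_le_ln[of "a i" "a (Suc i)" r] pos[of i] pos[of "Suc i"] ratio[rule_format, of "Suc i"] that
    unfolding a_def by simp
  have G_eq: "(\<Sum>t = 1..T. (f (x t) - f (x (t - 1))) * ln (f (x t) / f (x (t - 1)))) = G"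
    unfolding G_def a_def log_energy_def by (simp add: sum.atLeast1_atMost_eq)
  have "G \<ge> 0" unfolding G_def using pos by (intro sum_nonneg log_energy_nonneg) auto
  have "0 \<le> ln r" using \<open>r \<ge> 2\<close> by simp
  consider "T = 1" | "T \<ge> 2" using \<open>T \<ge> 1\<close> by linarith
  then show "(f (x T) - f (x 0)) * ln (f (x T) / f (x 0))
        \<le> 32 * (1 + (real T - 1)^2 * ln r) *
          (\<Sum>t = 1..T. (f (x t) - f (x (t - 1))) * ln (f (x t) / f (x (t - 1))))"
  proof cases
    case 1
    then show ?thesis using G_eq \<open>G \<ge> 0\<close> by (simp add: G_def)
  next
    case 2
    then have "8 * (real T)\<^sup>2 * ln r \<le> 32 * (1 + (real T - 1)^2 * ln r)"
      using \<open>0 \<le> ln r\<close> by (rule square_coefficient_le)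
    then have "8 * (real T)\<^sup>2 * ln r * G \<le> 32 * (1 + (real T - 1)^2 * ln r) * G"
      using \<open>G \<ge> 0\<close> by (rule mult_right_mono)
    then show ?thesis
      using log_energy_endpoints_le[of T a r, OF pos \<open>T \<ge> 1\<close> \<open>r \<ge> 2\<close> step]
      unfolding G_eq G_def by (simp add: log_energy_def a_def)
  qed
qed simp

end
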